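(* Let $T\in\mathcal{K}(V)$ with $\rho_S(T)\neq\emptyset$. For every intrinsic polynomial $P$, the operator $P(T)$ is closed.
   Context: Standing setting: either (a) $\mathbb{F}_0=\mathbb{F}=\mathbb{H}$, $V$ a two-sided quaternionic Banach space, $\mathcal{K}(V)$ the closed right linear operators on $V$ (defined on right subspaces); or (b) $\mathbb{F}=\mathbb{R}_n$ the real Clifford algebra generated by $e_1,\dots,e_n$, $\mathbb{F}_0=\mathbb{R}^{n+1}$ the paravectors $x_0+\sum x_ie_i$, $V=V_{\mathbb{R}}\otimes\mathbb{R}_n$ for a real Banach space $V_{\mathbb{R}}$, $\mathcal{K}(V)$ the operators of paravector type $T=T_0+\sum_{i=1}^nT_ie_i$ with closed $T_i$ on $V_{\mathbb{R}}$, defined on $\bigcap_i\operatorname{dom}(T_i)$. $\mathcal{B}(V)$ denotes the bounded everywhere defined such operators, $\mathcal{I}$ the identity; powers $T^k$ have the usual domains. For $s\in\mathbb{F}_0$, $\mathcal{Q}_s(T)=T^2-2\Re(s)T+|s|^2\mathcal{I}$ on $\operatorname{dom}(T^2)$, and $\rho_S(T)=\{s\in\mathbb{F}_0:\mathcal{Q}_s(T)^{-1}\in\mathcal{B}(V)\}$. An intrinsic polynomial is $P(s)=\sum_{k=0}^ma_ks^k$ with $a_k\in\mathbb{R}$, and $P(T)v:=\sum_{k=0}^ma_kT^kv$ for $v\in\operatorname{dom}(T^m)$. *)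

theory Defs
  imports "HOL-Analysis.Analysis" "HOL-Computational_Algebra.Polynomial"
    "HOL-Library.Function_Algebras"
begin

text \<open>Pointwise real vector space structure on functions (used for V = V_R \<otimes> R_n,
  represented by coefficient functions).\<close>
instantiation "fun" :: (type, real_vector) real_vector
begin
definition scaleR_fun_def: "scaleR r f = (\<lambda>x. scaleR r (f x))"
instance by standard (auto simp: scaleR_fun_def fun_eq_iff scaleR_add_right scaleR_add_left)
end

text \<open>An operator on a carrier is a pair (domain, action). Only the values on the
  domain matter.\<close>
type_synonym 'v op = "'v set \<times> ('v \<Rightarrow> 'v)"

definition op_dom :: "'v op \<Rightarrow> 'v set" where "op_dom T = fst T"
definition op_app :: "'v op \<Rightarrow> 'v \<Rightarrow> 'v" where "op_app T = snd T"

definition op_closed :: "('v::topological_space) op \<Rightarrow> bool" where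
  "op_closed T \<longleftrightarrow> closed {(x, op_app T x) | x. x \<in> op_dom T}"

fun op_pow :: "'v set \<Rightarrow> 'v op \<Rightarrow> nat \<Rightarrow> 'v op" where
  "op_pow Vc T 0 = (Vc, (\<lambda>v. v))"
| "op_pow Vc T (Suc k) =
     ({v \<in> op_dom (op_pow Vc T k). op_app (op_pow Vc T k) v \<in> op_dom T},
      (\<lambda>v. op_app T (op_app (op_pow Vc T k) v)))"

text \<open>Q_s(T) = T^2 - 2 Re(s) T + |s|^2 I on dom(T^2); it depends on s only through
  re = Re(s) and nsq = |s|^2.\<close>
definition op_Q :: "'v set \<Rightarrow> ('v::real_vector) op \<Rightarrow> real \<Rightarrow> real \<Rightarrow> 'v op" where
  "op_Q Vc T re nsq = (op_dom (op_pow Vc T 2),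
     (\<lambda>v. op_app (op_pow Vc T 2) v - (2 * re) *\<^sub>R op_app T v + nsq *\<^sub>R v))"

text \<open>Intrinsic polynomial P (real coefficients) applied to T:
  P(T) v = sum_{k=0}^m a_k T^k v on dom(T^m), m = degree P.\<close>
definition op_poly :: "'v set \<Rightarrow> ('v::real_vector) op \<Rightarrow> real poly \<Rightarrow> 'v op" where
  "op_poly Vc T p = (op_dom (op_pow Vc T (degree p)),
     (\<lambda>v. \<Sum>k\<le>degree p. coeff p k *\<^sub>R op_app (op_pow Vc T k) v))"

text \<open>"Q^{-1} exists and lies in the class Bset of bounded everywhere defined operators
  (everywhere = on the carrier Vc)": some S in Bset is a two-sided inverse of Q.\<close>
definition inv_in :: "'v set \<Rightarrow> 'v op \<Rightarrow> ('v \<Rightarrow> 'v) set \<Rightarrow> bool" where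
  "inv_in Vc Q Bset \<longleftrightarrow> op_dom Q \<subseteq> Vc \<and>
     (\<exists>S\<in>Bset. (\<forall>v\<in>Vc. S v \<in> op_dom Q \<and> op_app Q (S v) = v) \<and>
                (\<forall>u\<in>op_dom Q. S (op_app Q u) = u))"

datatype quat = Quat real real real real

fun qadd :: "quat \<Rightarrow> quat \<Rightarrow> quat" where
  "qadd (Quat a b c d) (Quat a' b' c' d') = Quat (a+a') (b+b') (c+c') (d+d')"

text \<open>Hamilton product (i^2 = j^2 = k^2 = ijk = -1).\<close>
fun qmul :: "quat \<Rightarrow> quat \<Rightarrow> quat" where
  "qmul (Quat a b c d) (Quat a' b' c' d') =
     Quat (a*a' - b*b' - c*c' - d*d')
          (a*b' + b*a' + c*d' - d*c')
          (a*c' - b*d' + c*a' + d*b')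
          (a*d' + b*c' - c*b' + d*a')"

definition qreal :: "real \<Rightarrow> quat" where "qreal r = Quat r 0 0 0"

fun qRe :: "quat \<Rightarrow> real" where "qRe (Quat a b c d) = a"

fun qabs :: "quat \<Rightarrow> real" where
  "qabs (Quat a b c d) = sqrt (a\<^sup>2 + b\<^sup>2 + c\<^sup>2 + d\<^sup>2)"

definition two_sided_qbanach :: "(quat \<Rightarrow> 'v::banach \<Rightarrow> 'v) \<Rightarrow> ('v \<Rightarrow> quat \<Rightarrow> 'v) \<Rightarrow> bool" where
  "two_sided_qbanach L R \<longleftrightarrow>
     (\<forall>r v. L (qreal r) v = r *\<^sub>R v \<and> R v (qreal r) = r *\<^sub>R v) \<and>
     (\<forall>a b v. L (qadd a b) v = L a v + L b v \<and> R v (qadd a b) = R v a + R v b) \<and>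
     (\<forall>a v w. L a (v + w) = L a v + L a w \<and> R (v + w) a = R v a + R w a) \<and>
     (\<forall>a b v. L (qmul a b) v = L a (L b v) \<and> R v (qmul a b) = R (R v a) b) \<and>
     (\<forall>a b v. L a (R v b) = R (L a v) b) \<and>
     (\<forall>a v. norm (L a v) = qabs a * norm v \<and> norm (R v a) = qabs a * norm v)"

definition qK :: "('v::banach \<Rightarrow> quat \<Rightarrow> 'v) \<Rightarrow> 'v op \<Rightarrow> bool" where
  "qK R T \<longleftrightarrow>
     0 \<in> op_dom T \<and>
     (\<forall>u\<in>op_dom T. \<forall>w\<in>op_dom T. u + w \<in> op_dom T) \<and>
     (\<forall>u\<in>op_dom T. \<forall>a. R u a \<in> op_dom T) \<and>
     (\<forall>u\<in>op_dom T. \<forall>w\<in>op_dom T. \<forall>a.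
         op_app T (R u a + w) = R (op_app T u) a + op_app T w) \<and>
     op_closed T"

definition qB :: "('v::banach \<Rightarrow> quat \<Rightarrow> 'v) \<Rightarrow> ('v \<Rightarrow> 'v) set" where
  "qB R = {S. bounded_linear S \<and> (\<forall>v a. S (R v a) = R (S v) a)}"

definition q_rhoS :: "('v::banach \<Rightarrow> quat \<Rightarrow> 'v) \<Rightarrow> 'v op \<Rightarrow> quat set" where
  "q_rhoS R T = {s. inv_in UNIV (op_Q UNIV T (qRe s) ((qabs s)\<^sup>2)) (qB R)}"

text \<open>An element of V = V_R \<otimes> R_n is represented by its coefficient function
  A \<mapsto> v_A over the multi-indices A \<subseteq> {1..n} (basis elements e_A = e_a1 ... e_ak,
  a1 < ... < ak), vanishing outside; topology: product topology (= norm topology,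
  since only finitely many coefficients are nonzero).\<close>
definition cliff_V :: "nat \<Rightarrow> (nat set \<Rightarrow> 'w::real_normed_vector) set" where
  "cliff_V n = {v. \<forall>A. \<not> A \<subseteq> {1..n} \<longrightarrow> v A = 0}"

text \<open>e_i e_{B sym-diff {i}} = cliff_sign i B e_B for 1 \<le> i \<le> n.\<close>
definition cliff_sign :: "nat \<Rightarrow> nat set \<Rightarrow> real" where
  "cliff_sign i B = (-1) ^ card {j\<in>B. j < i} * (if i \<in> B then 1 else -1)"

text \<open>Action of T = T_0 + sum_i T_i e_i on v = sum_A v_A e_A:
  T v = sum_i sum_A T_i(v_A) e_i e_A (left multiplication, so T is right linear).\<close>
definition cliff_act :: "nat \<Rightarrow> (nat \<Rightarrow> 'w \<Rightarrow> 'w) \<Rightarrow> (nat set \<Rightarrow> 'w::real_normed_vector) \<Rightarrow> (nat set \<Rightarrow> 'w)" where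
  "cliff_act n f v = (\<lambda>B. if B \<subseteq> {1..n} then
       f 0 (v B) + (\<Sum>i\<in>{1..n}. cliff_sign i B *\<^sub>R f i (v (if i \<in> B then B - {i} else insert i B)))
     else 0)"

definition real_closed_op :: "('w::real_normed_vector) op \<Rightarrow> bool" where
  "real_closed_op T \<longleftrightarrow> subspace (op_dom T) \<and>
     (\<forall>x\<in>op_dom T. \<forall>y\<in>op_dom T. \<forall>c. op_app T (c *\<^sub>R x + y) = c *\<^sub>R op_app T x + op_app T y) \<and>
     op_closed T"

definition para_op :: "nat \<Rightarrow> (nat \<Rightarrow> ('w::real_normed_vector) op) \<Rightarrow> (nat set \<Rightarrow> 'w) op" where
  "para_op n Ts = ({v \<in> cliff_V n. \<forall>A. \<forall>i\<le>n. v A \<in> op_dom (Ts i)},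
                   cliff_act n (\<lambda>i. op_app (Ts i)))"

definition cK :: "nat \<Rightarrow> (nat set \<Rightarrow> 'w::real_normed_vector) op \<Rightarrow> bool" where
  "cK n T \<longleftrightarrow> (\<exists>Ts. (\<forall>i\<le>n. real_closed_op (Ts i)) \<and> T = para_op n Ts)"

definition cB :: "nat \<Rightarrow> ((nat set \<Rightarrow> 'w::real_normed_vector) \<Rightarrow> (nat set \<Rightarrow> 'w)) set" where
  "cB n = {S. \<exists>Ss. (\<forall>i\<le>n. bounded_linear (Ss i)) \<and>
                   (\<forall>v\<in>cliff_V n. S v = cliff_act n Ss v)}"

text \<open>S-resolvent set; a paravector s = s_0 + sum_{i=1}^n s_i e_i is given by its
  coefficients s 0, ..., s n; Re(s) = s_0 and |s|^2 = sum_{i=0}^n s_i^2.\<close>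
definition c_rhoS :: "nat \<Rightarrow> (nat set \<Rightarrow> 'w::real_normed_vector) op \<Rightarrow> (nat \<Rightarrow> real) set" where
  "c_rhoS n T = {s. (\<forall>i>n. s i = 0) \<and>
      inv_in (cliff_V n) (op_Q (cliff_V n) T (s 0) (\<Sum>i\<le>n. (s i)\<^sup>2)) (cB n)}"

end

(*
  Fix s in the S-resolvent set and let S be the bounded inverse of Q = Q_s(T). By the closed
  graph theorem T S is bounded as well, and S commutes with T. Dividing a polynomial p by
  Q_s(X) = X^2 - 2 Re(s) X + |s|^2 with remainder r gives
    T S p(T) = (X * (p div Q_s))(T) + r_0 T S + r_1 T T S,
  where T T S = I + 2 Re(s) T S - |s|^2 S is bounded too. So for x_j \<rightarrow> x, convergence of
  p(T) x_j implies convergence of q(T) x_j for q = X * (p div Q_s), of degree deg p - 1.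
  If P(T) x_j converges, the polynomials of degree at most deg P along which convergence
  holds are therefore a vector space containing a polynomial of each such degree, i.e. they
  are all of them. Hence every T^k x_j converges, and since T is closed (which also follows
  from the boundedness of S and T S), x lies in the domain of T^(deg P) and P(T) x is the
  limit of P(T) x_j.

  Limits are taken along arbitrary filters: in the Clifford setting V is a subspace of the
  product space nat set \<Rightarrow> V_R, which is not first countable, so closedness of a graph
  cannot be tested with sequences.
*)

theory Submission
  imports Defs
begin

lemma Baire_ball_in_closure_norm_le:
  fixes f :: "'a::banach \<Rightarrow> 'b::real_normed_vector"
  obtains k x0 r where "r > 0" "ball x0 r \<subseteq> closure {x. norm (f x) \<le> real k}"
proof -
  define F where "F k = closure {x. norm (f x) \<le> real k}" for k
  have "\<Union>(range F) = UNIV"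
  proof -
    have "x \<in> F (nat \<lceil>norm (f x)\<rceil>)" for x
      unfolding F_def by (rule closure_subset[THEN subsetD]) (simp add: real_nat_ceiling_ge)
    thus ?thesis by blast
  qed
  hence "\<exists>k. interior (F k) \<noteq> {}"
    using Baire_category_alt[of euclidean "range F"]
    by (fastforce simp: completely_metrizable_space_euclidean F_def)
  then obtain k x0 r where "r > 0" "ball x0 r \<subseteq> F k"
    by (metis equals0I open_contains_ball open_interior interior_subset subset_trans)
  thus thesis using that F_def by blast
qed

lemma linear_approximately_bounded:
  fixes f :: "'a::banach \<Rightarrow> 'b::real_normed_vector"
  assumes lin: "linear f"
  obtains M where "M \<ge> 0" "\<And>z e. e > 0 \<Longrightarrow> \<exists>w. norm (z - w) < e \<and> norm (f w) \<le> M * norm z"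
proof -
  obtain k x0 r where r: "r > 0" and ball: "ball x0 r \<subseteq> closure {x. norm (f x) \<le> real k}"
    by (rule Baire_ball_in_closure_norm_le)
  have near: "\<exists>w. norm (z - w) < e \<and> norm (f w) \<le> 2 * real k" if "norm z < r" "e > 0" for z e
  proof -
    have "x0 + z \<in> closure {x. norm (f x) \<le> real k}" "x0 \<in> closure {x. norm (f x) \<le> real k}"
      using ball that r by (auto simp: dist_norm)
    then obtain a b where ab: "norm (f a) \<le> real k" "dist a (x0 + z) < e/2"
        "norm (f b) \<le> real k" "dist b x0 < e/2"
      unfolding closure_approachable using \<open>e > 0\<close> by (metis half_gt_zero mem_Collect_eq)
    have "norm (f (a - b)) \<le> 2 * real k"
      using ab norm_triangle_ineq4[of "f a" "f b"] by (simp add: linear_diff[OF lin])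
    moreover have "norm (z - (a - b)) < e"
      using ab norm_triangle_ineq[of "x0 + z - a" "b - x0"]
      by (simp add: dist_norm norm_minus_commute algebra_simps)
    ultimately show ?thesis by blast
  qed
  have "\<exists>w. norm (z - w) < e \<and> norm (f w) \<le> 4 * real k / r * norm z" if "e > 0" for z e
  proof (cases "z = 0")
    case True thus ?thesis using that lin by (auto intro!: exI[of _ 0] simp: linear_0)
  next
    case False
    define c where "c = r / (2 * norm z)"
    have c: "c > 0" "norm (c *\<^sub>R z) < r" using False r by (simp_all add: c_def)
    then obtain w where w: "norm (c *\<^sub>R z - w) < c * e" "norm (f w) \<le> 2 * real k"
      using near \<open>e > 0\<close> by (meson mult_pos_pos)
    have "z - (1/c) *\<^sub>R w = (1/c) *\<^sub>R (c *\<^sub>R z - w)"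
      using c by (simp add: algebra_simps)
    hence "norm (z - (1/c) *\<^sub>R w) = (1/c) * norm (c *\<^sub>R z - w)"
      using c by simp
    also have "\<dots> < e" using c w(1) by (simp add: field_simps)
    finally have "norm (z - (1/c) *\<^sub>R w) < e" .
    moreover have "norm (f ((1/c) *\<^sub>R w)) \<le> 4 * real k / r * norm z"
      using c w(2) False r by (simp add: linear_scale[OF lin] c_def field_simps)
    ultimately show ?thesis by blast
  qed
  thus thesis using that r by (metis divide_nonneg_pos mult_nonneg_nonneg of_nat_0_le_iff zero_le_numeral)
qed

text \<open>Successive approximation: x is the sum of the W e_j along the errors
  e_(j+1) = e_j - W e_j, and by closedness of the graph f x is the sum of the f (W e_j).\<close>
lemma closed_graph_bound_of_halving:
  fixes f :: "'a::banach \<Rightarrow> 'b::banach"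
  assumes lin: "linear f" and graph: "closed (range (\<lambda>x. (x, f x)))" and M: "M \<ge> 0"
    and W: "\<And>z. norm (z - W z) \<le> norm z / 2" "\<And>z. norm (f (W z)) \<le> M * norm z"
  shows "norm (f x) \<le> 2 * M * norm x"
proof -
  define e where "e j = ((\<lambda>z. z - W z) ^^ j) x" for j
  have e_bound: "norm (e j) \<le> norm x * (1/2) ^ j" for j
  proof (induction j)
    case (Suc j)
    have "norm (e (Suc j)) \<le> norm (e j) / 2" using W(1) by (simp add: e_def)
    thus ?case using Suc by simp
  qed (simp add: e_def)
  have partial: "(\<Sum>j<N. W (e j)) = x - e N" for N
    by (induction N) (auto simp: e_def)
  have f_bound: "norm (f (W (e j))) \<le> M * norm x * (1/2) ^ j" for j
    using order_trans[OF W(2) mult_left_mono[OF e_bound M]] by (simp add: mult.assoc)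
  have geom: "summable (\<lambda>j. M * norm x * (1/2::real) ^ j)"
    by (intro summable_mult summable_geometric) auto
  have sn: "summable (\<lambda>j. norm (f (W (e j))))"
    by (rule summable_comparison_test[OF _ geom]) (use f_bound in auto)
  have e0: "e \<longlonglongrightarrow> 0"
    by (rule tendsto_norm_zero_cancel, rule Lim_null_comparison[of _ "\<lambda>j. norm x * (1/2) ^ j"])
      (use e_bound in \<open>auto intro!: tendsto_mult_right_zero LIMSEQ_power_zero\<close>)
  hence xs: "(\<lambda>N. \<Sum>j<N. W (e j)) \<longlonglongrightarrow> x"
    unfolding partial using tendsto_diff[OF tendsto_const[of x] e0] by simp
  have fs: "(\<lambda>N. f (\<Sum>j<N. W (e j))) \<longlonglongrightarrow> (\<Sum>j. f (W (e j)))"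
    using summable_LIMSEQ[OF summable_norm_cancel[OF sn]] by (simp add: linear_sum[OF lin])
  have "(x, \<Sum>j. f (W (e j))) \<in> range (\<lambda>x. (x, f x))"
    by (rule closed_sequentially[OF graph _ tendsto_Pair[OF xs fs]]) blast
  hence "norm (f x) \<le> (\<Sum>j. norm (f (W (e j))))"
    using summable_norm[OF sn] by auto
  also have "\<dots> \<le> (\<Sum>j. M * norm x * (1/2) ^ j)"
    by (rule suminf_le[OF _ sn geom]) (use f_bound in auto)
  also have "\<dots> = 2 * M * norm x"
    using suminf_geometric[of "1/2::real"] by (simp add: suminf_mult)
  finally show ?thesis .
qed

lemma closed_graph_imp_bounded_linear:
  fixes f :: "'a::banach \<Rightarrow> 'b::banach"
  assumes lin: "linear f" and graph: "closed (range (\<lambda>x. (x, f x)))"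
  shows "bounded_linear f"
proof -
  obtain M where M: "M \<ge> 0" "\<And>z e. e > 0 \<Longrightarrow> \<exists>w. norm (z - w) < e \<and> norm (f w) \<le> M * norm z"
    using linear_approximately_bounded[OF lin] by blast
  have "\<exists>w. norm (z - w) \<le> norm z / 2 \<and> norm (f w) \<le> M * norm z" for z
  proof (cases "z = 0")
    case True thus ?thesis using lin by (auto intro!: exI[of _ 0] simp: linear_0)
  next
    case False thus ?thesis using M(2)[of "norm z / 2" z] by (auto intro: less_imp_le)
  qed
  then obtain W where "\<And>z. norm (z - W z) \<le> norm z / 2" "\<And>z. norm (f (W z)) \<le> M * norm z"
    by metis
  hence "norm (f x) \<le> 2 * M * norm x" for x
    using closed_graph_bound_of_halving[OF lin graph M(1)] by blast
  thus ?thesis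
    using lin by (intro bounded_linear_intro[of f "2 * M"]) (auto simp: linear_add linear_scale mult.commute)
qed

definition op_linear :: "('v::real_vector) op \<Rightarrow> bool" where
  "op_linear T \<longleftrightarrow> subspace (op_dom T) \<and>
     (\<forall>x\<in>op_dom T. \<forall>y\<in>op_dom T. \<forall>c. op_app T (c *\<^sub>R x + y) = c *\<^sub>R op_app T x + op_app T y)"

lemma real_closed_op_iff: "real_closed_op T \<longleftrightarrow> op_linear T \<and> op_closed T"
  by (auto simp: real_closed_op_def op_linear_def)

lemma op_linear_app_zero: "op_linear T \<Longrightarrow> op_app T 0 = 0"
  unfolding op_linear_def using subspace_0[of "op_dom T"] by (metis add_cancel_right_right scaleR_one)

lemma op_linear_app_add:
  "op_linear T \<Longrightarrow> x \<in> op_dom T \<Longrightarrow> y \<in> op_dom T \<Longrightarrow> op_app T (x + y) = op_app T x + op_app T y"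
  unfolding op_linear_def by (metis scaleR_one)

lemma op_linear_app_scale:
  "op_linear T \<Longrightarrow> x \<in> op_dom T \<Longrightarrow> op_app T (c *\<^sub>R x) = c *\<^sub>R op_app T x"
  using op_linear_app_zero[of T] unfolding op_linear_def by (metis add.right_neutral subspace_0)

lemma op_linear_app_diff:
  "op_linear T \<Longrightarrow> x \<in> op_dom T \<Longrightarrow> y \<in> op_dom T \<Longrightarrow> op_app T (x - y) = op_app T x - op_app T y"
  unfolding op_linear_def by (metis scaleR_minus1_left uminus_add_conv_diff)

lemma op_linear_sum:
  assumes T: "op_linear T" and "finite I" and "\<And>i. i \<in> I \<Longrightarrow> x i \<in> op_dom T"
  shows "(\<Sum>i\<in>I. c i *\<^sub>R x i) \<in> op_dom T \<and>
    op_app T (\<Sum>i\<in>I. c i *\<^sub>R x i) = (\<Sum>i\<in>I. c i *\<^sub>R op_app T (x i))"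
  using assms(2,3)
proof (induction I rule: finite_induct)
  case empty thus ?case using T op_linear_app_zero[OF T] by (simp add: op_linear_def subspace_0)
next
  case (insert i I)
  thus ?case using T unfolding op_linear_def by (simp add: subspace_add subspace_scale)
qed

lemma closed_op_comp_bounded_linear:
  fixes T :: "('b::banach) op" and S :: "'a::banach \<Rightarrow> 'b"
  assumes T: "op_linear T" "op_closed T" and S: "bounded_linear S" and S_dom: "\<And>x. S x \<in> op_dom T"
  shows "bounded_linear (\<lambda>x. op_app T (S x))"
proof (rule closed_graph_imp_bounded_linear)
  have lin: "linear S" using S by (rule bounded_linear.linear)
  show "linear (\<lambda>x. op_app T (S x))"
  proof (rule linearI)
    fix x y show "op_app T (S (x + y)) = op_app T (S x) + op_app T (S y)"
      using linear_add[OF lin] op_linear_app_add[OF T(1) S_dom S_dom] by simp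
  next
    fix c x show "op_app T (S (c *\<^sub>R x)) = c *\<^sub>R op_app T (S x)"
      using linear_scale[OF lin] op_linear_app_scale[OF T(1) S_dom] by simp
  qed
  have graph: "range (\<lambda>x. (x, op_app T (S x))) =
      (\<lambda>z. (S (fst z), snd z)) -` {(x, op_app T x) | x. x \<in> op_dom T}"
    using S_dom by auto
  show "closed (range (\<lambda>x. (x, op_app T (S x))))"
    unfolding graph using T(2) unfolding op_closed_def
    by (rule closed_vimage) (intro continuous_on_Pair bounded_linear.continuous_on[OF S] continuous_intros)
qed

lemma op_pow_0 [simp]: "op_dom (op_pow V T 0) = V" "op_app (op_pow V T 0) v = v"
  by (simp_all add: op_dom_def op_app_def)

lemma op_pow_Suc:
  "op_dom (op_pow V T (Suc k)) = {v \<in> op_dom (op_pow V T k). op_app (op_pow V T k) v \<in> op_dom T}"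
  "op_app (op_pow V T (Suc k)) v = op_app T (op_app (op_pow V T k) v)"
  by (simp_all add: op_dom_def op_app_def)

declare op_pow.simps [simp del]

lemma op_poly_dom_app:
  "op_dom (op_poly V T p) = op_dom (op_pow V T (degree p))"
  "op_app (op_poly V T p) v = (\<Sum>k\<le>degree p. coeff p k *\<^sub>R op_app (op_pow V T k) v)"
  by (simp_all add: op_poly_def op_dom_def op_app_def)

lemma op_Q_dom_app:
  "op_dom (op_Q V T re nsq) = op_dom (op_pow V T 2)"
  "op_app (op_Q V T re nsq) v = op_app (op_pow V T 2) v - (2 * re) *\<^sub>R op_app T v + nsq *\<^sub>R v"
  by (simp_all add: op_Q_def op_dom_def op_app_def)

lemma degree_div_poly:
  fixes p q :: "'a::field poly"
  assumes q: "q \<noteq> 0" and deg: "degree q \<le> degree p"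
  shows "degree (p div q) = degree p - degree q"
proof (cases "p div q = 0")
  case True
  hence "p = p mod q" by (metis add_0 div_mult_mod_eq mult_zero_left)
  hence "p = 0" using degree_mod_less[OF q, of p] deg by auto
  thus ?thesis by simp
next
  case False
  have "degree (p mod q) < degree (p div q * q) \<or> p mod q = 0"
    using degree_mod_less[OF q, of p] False q by (auto simp: degree_mult_eq)
  hence "degree p = degree (p div q * q)"
    by (metis add.right_neutral degree_add_eq_right div_mult_mod_eq add.commute)
  thus ?thesis using False q by (simp add: degree_mult_eq)
qed

lemma poly_in_lincomb_closed_set:
  fixes G :: "'a::field poly set"
  assumes lincomb: "\<And>c p q. p \<in> G \<Longrightarrow> q \<in> G \<Longrightarrow> smult c p + q \<in> G"
    and one: "1 \<in> G" and degrees: "\<And>d. 1 \<le> d \<Longrightarrow> d \<le> m \<Longrightarrow> \<exists>q\<in>G. degree q = d"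
    and p: "degree p \<le> m"
  shows "p \<in> G"
proof -
  have "smult (-1) 1 + 1 = (0 :: 'a poly)" by (simp add: one_pCons)
  hence zero: "0 \<in> G" using lincomb[OF one one, of "-1"] by simp
  have "degree p \<le> k \<Longrightarrow> p \<in> G" if "k \<le> m" for k p
    using that
  proof (induction k arbitrary: p)
    case 0
    hence "p = smult (coeff p 0) 1 + 0" using degree_0_id[of p] by simp
    thus ?case using lincomb one zero by metis
  next
    case (Suc k)
    obtain q where q: "q \<in> G" "degree q = Suc k" using degrees Suc.prems(2) by auto
    define c where "c = coeff p (Suc k) / lead_coeff q"
    have "q \<noteq> 0" using q(2) by auto
    hence "lead_coeff q \<noteq> 0" by simp
    hence "coeff (p - smult c q) i = 0" if "k < i" for i
      using that q(2) Suc.prems(1) by (cases "i = Suc k") (auto simp: c_def coeff_eq_0)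
    hence "degree (p - smult c q) \<le> k" by (simp add: degree_le)
    hence "p - smult c q \<in> G" using Suc.IH Suc.prems(2) by simp
    hence "smult c q + (p - smult c q) \<in> G" using lincomb q(1) by blast
    thus ?case by simp
  qed
  thus ?thesis using p by blast
qed

locale linear_op =
  fixes V :: "'a::real_vector set" and T :: "'a op"
  assumes subspace_carrier: "subspace V"
    and linear: "op_linear T"
    and dom_subset: "op_dom T \<subseteq> V"
    and app_in_carrier: "x \<in> op_dom T \<Longrightarrow> op_app T x \<in> V"
begin

abbreviation "D k \<equiv> op_dom (op_pow V T k)"
abbreviation "Tpow k \<equiv> op_app (op_pow V T k)"
abbreviation "Tpoly p \<equiv> op_app (op_poly V T p)"

lemma Tpow_Suc2 [simp]: "Tpow (Suc k) x = Tpow k (op_app T x)"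
  by (induction k arbitrary: x) (simp_all add: op_pow_Suc)

lemma dom_pow_Suc2: "x \<in> D (Suc k) \<longleftrightarrow> x \<in> op_dom T \<and> op_app T x \<in> D k"
proof (induction k arbitrary: x)
  case 0 thus ?case using dom_subset app_in_carrier by (auto simp: op_pow_Suc)
next
  case (Suc k)
  have "x \<in> D (Suc (Suc k)) \<longleftrightarrow> x \<in> D (Suc k) \<and> Tpow (Suc k) x \<in> op_dom T"
    by (simp only: op_pow_Suc(1)[of V T "Suc k"] mem_Collect_eq)
  also have "\<dots> \<longleftrightarrow> x \<in> op_dom T \<and> op_app T x \<in> D k \<and> Tpow k (op_app T x) \<in> op_dom T"
    using Suc.IH by simp
  also have "\<dots> \<longleftrightarrow> x \<in> op_dom T \<and> op_app T x \<in> D (Suc k)"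
    by (simp only: op_pow_Suc(1)[of V T k] mem_Collect_eq)
  finally show ?case .
qed

lemma dom_pow_subset_carrier: "D k \<subseteq> V"
  by (induction k) (auto simp: op_pow_Suc)

lemma dom_pow_antimono: "k \<le> l \<Longrightarrow> D l \<subseteq> D k"
  by (induction l rule: dec_induct) (auto simp: op_pow_Suc)

lemma Tpow_in_dom_pow: "x \<in> D (k + l) \<Longrightarrow> Tpow k x \<in> D l"
proof (induction k arbitrary: x)
  case (Suc k) thus ?case by (simp add: dom_pow_Suc2)
qed simp

lemma Tpow_in_dom: "x \<in> D m \<Longrightarrow> k < m \<Longrightarrow> Tpow k x \<in> op_dom T"
proof -
  assume x: "x \<in> D m" and "k < m"
  then obtain j where "m = Suc (k + j)" using less_imp_Suc_add by blast
  thus ?thesis using Tpow_in_dom_pow[of x k "Suc j"] x by (simp add: dom_pow_Suc2)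
qed

lemma op_linear_pow: "op_linear (op_pow V T k)"
proof (induction k)
  case 0 thus ?case using subspace_carrier by (simp add: op_linear_def)
next
  case (Suc k)
  note IH = op_linear_app_zero[OF Suc] op_linear_app_add[OF Suc] op_linear_app_scale[OF Suc]
  have dom: "subspace (op_dom T)" "subspace (D k)" using linear Suc by (simp_all add: op_linear_def)
  have "subspace (D (Suc k))"
    unfolding subspace_def op_pow_Suc(1) using dom IH
    by (auto simp: subspace_0 subspace_add subspace_scale)
  moreover have "Tpow (Suc k) (c *\<^sub>R x + y) = c *\<^sub>R Tpow (Suc k) x + Tpow (Suc k) y"
    if "x \<in> D (Suc k)" "y \<in> D (Suc k)" for x y c
    using that Suc linear subspace_scale[OF dom(2)] subspace_scale[OF dom(1)] IH
    by (simp add: op_linear_def op_pow_Suc)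
  ultimately show ?case by (simp add: op_linear_def)
qed

lemma Tpoly_eq_sum: "degree p \<le> N \<Longrightarrow> Tpoly p x = (\<Sum>k\<le>N. coeff p k *\<^sub>R Tpow k x)"
  unfolding op_poly_dom_app by (rule sum.mono_neutral_left) (auto simp: coeff_eq_0)

lemma Tpoly_lincomb: "Tpoly (smult c p + q) x = c *\<^sub>R Tpoly p x + Tpoly q x"
proof -
  define N where "N = max (degree p) (degree q)"
  have "degree (smult c p + q) \<le> N"
    unfolding N_def by (intro degree_add_le) (auto intro: le_trans[OF degree_smult_le])
  thus ?thesis
    by (simp add: Tpoly_eq_sum[of _ N] N_def scaleR_add_left sum.distrib scaleR_sum_right)
qed

lemma op_linear_poly: "op_linear (op_poly V T p)"
proof -
  have "subspace (D (degree p))" using op_linear_pow op_linear_def by blast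
  moreover have "Tpoly p (c *\<^sub>R x + y) = c *\<^sub>R Tpoly p x + Tpoly p y"
    if "x \<in> D (degree p)" "y \<in> D (degree p)" for x y c
  proof -
    have "x \<in> D k" "y \<in> D k" if "k \<le> degree p" for k
      using that \<open>x \<in> D (degree p)\<close> \<open>y \<in> D (degree p)\<close> dom_pow_antimono by blast+
    hence "Tpow k (c *\<^sub>R x + y) = c *\<^sub>R Tpow k x + Tpow k y" if "k \<le> degree p" for k
      using op_linear_pow that unfolding op_linear_def by blast
    thus ?thesis
      by (simp add: op_poly_dom_app scaleR_add_right sum.distrib scaleR_sum_right mult.commute)
  qed
  ultimately show ?thesis by (simp add: op_linear_def op_poly_dom_app)
qed

lemma Tpoly_one: "Tpoly 1 x = x"
  by (simp add: op_poly_dom_app)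

lemma Tpoly_monom: "Tpoly (monom 1 k) x = Tpow k x"
proof -
  have eq: "(\<lambda>i. coeff (monom 1 k) i *\<^sub>R Tpow i x) = (\<lambda>i. if k = i then Tpow k x else 0)"
    by (auto simp: coeff_monom)
  show ?thesis unfolding op_poly_dom_app(2) eq by (simp add: degree_monom_eq)
qed

lemma Tpoly_in_dom: "x \<in> D (degree p + l) \<Longrightarrow> Tpoly p x \<in> D l"
proof -
  assume x: "x \<in> D (degree p + l)"
  have "Tpow k x \<in> D l" if "k \<in> {..degree p}" for k
  proof (rule Tpow_in_dom_pow)
    show "x \<in> D (k + l)" using dom_pow_antimono[of "k + l" "degree p + l"] that x by auto
  qed
  thus ?thesis unfolding op_poly_dom_app(2)
    using op_linear_sum[OF op_linear_pow finite_atMost, where x = "\<lambda>k. Tpow k x" and c = "coeff p"]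
    by simp
qed

lemma Tpoly_pCons:
  assumes x: "x \<in> D (Suc N)" and p: "degree p \<le> N"
  shows "Tpoly (pCons a p) x = a *\<^sub>R x + op_app T (Tpoly p x)"
proof -
  have dom: "Tpow k x \<in> op_dom T" if "k \<in> {..N}" for k
    using Tpow_in_dom[OF x] that by simp
  have "degree (pCons a p) \<le> Suc N" using p degree_pCons_le[of a p] by linarith
  hence "Tpoly (pCons a p) x = (\<Sum>k\<le>Suc N. coeff (pCons a p) k *\<^sub>R Tpow k x)"
    by (rule Tpoly_eq_sum)
  also have "\<dots> = coeff (pCons a p) 0 *\<^sub>R Tpow 0 x +
      (\<Sum>k\<le>N. coeff (pCons a p) (Suc k) *\<^sub>R Tpow (Suc k) x)"
    by (rule sum.atMost_Suc_shift)
  also have "\<dots> = a *\<^sub>R x + (\<Sum>k\<le>N. coeff p k *\<^sub>R op_app T (Tpow k x))"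
    by (simp only: coeff_pCons_0 coeff_pCons_Suc op_pow_0(2) op_pow_Suc(2))
  also have "(\<Sum>k\<le>N. coeff p k *\<^sub>R op_app T (Tpow k x)) = op_app T (\<Sum>k\<le>N. coeff p k *\<^sub>R Tpow k x)"
    using op_linear_sum[OF linear finite_atMost, where x = "\<lambda>k. Tpow k x" and c = "coeff p"] dom
    by auto
  also have "\<dots> = op_app T (Tpoly p x)" using Tpoly_eq_sum[OF p] by simp
  finally show ?thesis .
qed

lemma Tpoly_mult: "x \<in> D (degree p + degree q) \<Longrightarrow> Tpoly (p * q) x = Tpoly p (Tpoly q x)"
proof (induction p arbitrary: x rule: pCons_induct)
  case 0 thus ?case by (simp add: op_poly_dom_app)
next
  case (pCons a p)
  have "Tpoly (pCons a p * q) x = a *\<^sub>R Tpoly q x + Tpoly (pCons 0 (p * q)) x"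
    using Tpoly_lincomb[of a q "pCons 0 (p * q)"] by simp
  also have "\<dots> = Tpoly (pCons a p) (Tpoly q x)"
  proof (cases "p = 0")
    case True thus ?thesis by (simp add: op_poly_dom_app)
  next
    case False
    hence x: "x \<in> D (Suc (degree p + degree q))" using pCons.prems by simp
    hence "x \<in> D (degree p + degree q)"
      using dom_pow_antimono[of "degree p + degree q" "Suc (degree p + degree q)"] by auto
    hence "Tpoly (pCons 0 (p * q)) x = op_app T (Tpoly p (Tpoly q x))"
      using Tpoly_pCons[OF x degree_mult_le, of 0] pCons.IH by simp
    moreover have "Tpoly q x \<in> D (Suc (degree p))"
      using Tpoly_in_dom[of x q "Suc (degree p)"] x by (simp add: add.commute)
    ultimately show ?thesis using Tpoly_pCons[of "Tpoly q x" "degree p" p a] by simp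
  qed
  finally show ?case .
qed

end

locale Q_inverse = linear_op +
  fixes S :: "'a \<Rightarrow> 'a" and re nsq :: real
  assumes S_in_dom: "v \<in> V \<Longrightarrow> S v \<in> D 2"
    and Q_S: "v \<in> V \<Longrightarrow> op_app (op_Q V T re nsq) (S v) = v"
    and S_Q: "u \<in> D 2 \<Longrightarrow> S (op_app (op_Q V T re nsq) u) = u"
begin

definition Q_poly :: "real poly" where "Q_poly = [:nsq, - (2 * re), 1:]"

lemma degree_Q_poly: "degree Q_poly = 2"
  by (simp add: Q_poly_def)

lemma Q_poly_nonzero: "Q_poly \<noteq> 0"
  using degree_Q_poly by auto

lemma degree_div_Q_poly: "2 \<le> degree p \<Longrightarrow> degree (p div Q_poly) + 2 = degree p"
  using degree_div_poly[OF Q_poly_nonzero, of p] degree_Q_poly by simp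

lemma degree_pCons_div_Q_poly:
  assumes "2 \<le> degree p"
  shows "degree (pCons 0 (p div Q_poly)) = degree p - 1"
proof -
  have "p div Q_poly \<noteq> 0"
  proof
    assume "p div Q_poly = 0"
    hence "p = p mod Q_poly" by (metis add_0 div_mult_mod_eq mult_zero_left)
    thus False using degree_mod_less[OF Q_poly_nonzero, of p] degree_Q_poly assms by force
  qed
  thus ?thesis using degree_div_Q_poly[OF assms] by simp
qed

lemma op_Q_eq_Tpoly: "op_app (op_Q V T re nsq) u = Tpoly Q_poly u"
  by (simp add: op_Q_dom_app op_poly_dom_app Q_poly_def numeral_2_eq_2 algebra_simps)

lemma S_in_dom_T: "v \<in> V \<Longrightarrow> S v \<in> op_dom T \<and> op_app T (S v) \<in> op_dom T"
  using S_in_dom[of v] by (simp add: numeral_2_eq_2 dom_pow_Suc2)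

lemma T_T_S: "v \<in> V \<Longrightarrow> op_app T (op_app T (S v)) = v + (2 * re) *\<^sub>R op_app T (S v) - nsq *\<^sub>R S v"
  using Q_S[of v] by (simp add: op_Q_dom_app numeral_2_eq_2 algebra_simps)

lemma S_linear: "x \<in> V \<Longrightarrow> y \<in> V \<Longrightarrow> S (c *\<^sub>R x + y) = c *\<^sub>R S x + S y"
proof -
  assume x: "x \<in> V" and y: "y \<in> V"
  have dom: "c *\<^sub>R S x + S y \<in> D 2"
    using S_in_dom[OF x] S_in_dom[OF y] op_linear_pow[of 2]
    by (simp add: op_linear_def subspace_add subspace_scale)
  have "Tpoly Q_poly (c *\<^sub>R S x + S y) = c *\<^sub>R x + y"
    using op_linear_poly[of Q_poly] S_in_dom x y Q_S
    by (simp add: op_linear_def op_poly_dom_app(1) degree_Q_poly flip: op_Q_eq_Tpoly)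
  thus ?thesis using S_Q[OF dom] by (simp add: op_Q_eq_Tpoly)
qed

lemma S_add: "x \<in> V \<Longrightarrow> y \<in> V \<Longrightarrow> S (x + y) = S x + S y"
  using S_linear[of x y 1] by simp

lemma S_scale: "x \<in> V \<Longrightarrow> S (c *\<^sub>R x) = c *\<^sub>R S x"
  using S_linear[of x 0 c] S_linear[of 0 0 1] subspace_0[OF subspace_carrier] by simp

lemma T_commute_S: "u \<in> op_dom T \<Longrightarrow> op_app T (S u) = S (op_app T u)"
proof -
  assume u: "u \<in> op_dom T"
  have uV: "u \<in> V" using u dom_subset by blast
  define w where "w = S u"
  have w: "w \<in> op_dom T" "op_app T w \<in> op_dom T" using S_in_dom_T[OF uV] by (simp_all add: w_def)
  have "Tpow 2 w = u + (2 * re) *\<^sub>R op_app T w - nsq *\<^sub>R w"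
    using T_T_S[OF uV] by (simp add: w_def numeral_2_eq_2)
  hence "Tpow 2 w \<in> op_dom T"
    using u w linear unfolding op_linear_def by (simp add: subspace_add subspace_diff subspace_scale)
  hence "w \<in> D (Suc 2)"
    using S_in_dom[OF uV] unfolding op_pow_Suc(1)[of V T 2] by (simp add: w_def)
  hence w3: "w \<in> D (degree (monom (1::real) 1) + degree Q_poly)"
    by (simp add: degree_Q_poly degree_monom_eq numeral_3_eq_3)
  have "op_app T (Tpoly Q_poly w) = Tpoly Q_poly (op_app T w)"
    using Tpoly_mult[OF w3] Tpoly_mult[of w Q_poly "monom 1 1"] w3
    by (simp add: Tpoly_monom mult.commute add.commute)
  hence "op_app (op_Q V T re nsq) (op_app T w) = op_app T u"
    using Q_S[OF uV] by (simp add: op_Q_eq_Tpoly w_def)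
  moreover have "op_app T w \<in> D 2"
    using w3 Tpow_in_dom_pow[of w 1 2] by (simp add: degree_Q_poly degree_monom_eq)
  ultimately show ?thesis using S_Q by (metis w_def)
qed

lemma S_Tpoly:
  assumes p: "2 \<le> degree p" and x: "x \<in> D (degree p)"
  shows "S (Tpoly p x) = Tpoly (p div Q_poly) x + coeff (p mod Q_poly) 0 *\<^sub>R S x
    + coeff (p mod Q_poly) 1 *\<^sub>R S (op_app T x)"
proof -
  define d r where "d = p div Q_poly" and "r = p mod Q_poly"
  have deg_d: "degree d + 2 = degree p" using degree_div_Q_poly[OF p] by (simp add: d_def)
  have deg_r: "degree r \<le> 1"
    using degree_mod_less[OF Q_poly_nonzero, of p] by (auto simp: r_def degree_Q_poly)
  have xV: "x \<in> V" "op_app T x \<in> V"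
    using x p dom_pow_subset_carrier Tpow_in_dom[of x "degree p" 0] app_in_carrier by auto
  have "Tpoly p x = Tpoly (Q_poly * d) x + Tpoly r x"
    using Tpoly_lincomb[of 1 "Q_poly * d" r x] div_mult_mod_eq[of p Q_poly]
    by (simp add: d_def r_def mult.commute)
  also have "Tpoly (Q_poly * d) x = op_app (op_Q V T re nsq) (Tpoly d x)"
    using Tpoly_mult[of x Q_poly d] x deg_d by (simp add: degree_Q_poly op_Q_eq_Tpoly add.commute)
  also have "Tpoly r x = coeff r 0 *\<^sub>R x + coeff r 1 *\<^sub>R op_app T x"
    using Tpoly_eq_sum[OF deg_r] by (simp add: numeral_2_eq_2)
  finally have "S (Tpoly p x) = S (op_app (op_Q V T re nsq) (Tpoly d x)) + coeff r 0 *\<^sub>R S x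
      + coeff r 1 *\<^sub>R S (op_app T x)"
    using subspace_carrier xV Tpoly_in_dom[of "Tpoly d x" Q_poly 0] Tpoly_in_dom[of x d 2] x deg_d
    by (simp add: S_add S_scale subspace_add subspace_scale degree_Q_poly op_Q_eq_Tpoly add.assoc)
  also have "S (op_app (op_Q V T re nsq) (Tpoly d x)) = Tpoly d x"
    using S_Q Tpoly_in_dom[of x d 2] x deg_d by (simp add: add.commute)
  finally show ?thesis by (simp add: d_def r_def)
qed

lemma T_S_Tpoly:
  assumes p: "2 \<le> degree p" and x: "x \<in> D (degree p)"
  shows "op_app T (S (Tpoly p x)) = Tpoly (pCons 0 (p div Q_poly)) x
    + coeff (p mod Q_poly) 0 *\<^sub>R op_app T (S x) + coeff (p mod Q_poly) 1 *\<^sub>R op_app T (op_app T (S x))"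
proof -
  define d c0 c1 where "d = p div Q_poly" and "c0 = coeff (p mod Q_poly) 0" and "c1 = coeff (p mod Q_poly) 1"
  have x1: "x \<in> D (Suc (degree d))"
    using x dom_pow_antimono[of "Suc (degree d)" "degree p"] degree_div_Q_poly[OF p] by (auto simp: d_def)
  have xT: "x \<in> op_dom T" "op_app T x \<in> V"
    using x1 app_in_carrier by (simp_all add: dom_pow_Suc2)
  have dom: "Tpoly d x \<in> op_dom T" "S x \<in> op_dom T" "S (op_app T x) \<in> op_dom T"
    using Tpoly_in_dom[of x d 1] x1 S_in_dom_T xT dom_subset by (auto simp: dom_pow_Suc2)
  have "op_app T (S (Tpoly p x)) = op_app T (Tpoly d x + c0 *\<^sub>R S x + c1 *\<^sub>R S (op_app T x))"
    using S_Tpoly[OF p x] by (simp add: d_def c0_def c1_def)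
  also have "\<dots> = op_app T (Tpoly d x) + c0 *\<^sub>R op_app T (S x) + c1 *\<^sub>R op_app T (S (op_app T x))"
    using dom linear op_linear_app_add[OF linear] op_linear_app_scale[OF linear]
    unfolding op_linear_def by (simp add: subspace_add subspace_scale)
  also have "op_app T (Tpoly d x) = Tpoly (pCons 0 d) x" using Tpoly_pCons[OF x1] by simp
  also have "op_app T (S (op_app T x)) = op_app T (op_app T (S x))" using T_commute_S xT by simp
  finally show ?thesis by (simp add: d_def c0_def c1_def)
qed

end

text \<open>The topology of the ambient type enters only through these assumptions, so that both a
  Banach space and the product space nat set \<Rightarrow> V_R (which is no instance of the metric type
  classes) are covered.\<close>
locale Q_resolvent = Q_inverse V T S re nsq
  for V :: "'a::{real_vector, topological_space} set" and T S re nsq +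
  assumes Hausdorff: "Hausdorff_space (euclidean :: 'a topology)"
    and continuous_add: "continuous_on UNIV (\<lambda>z::'a \<times> 'a. fst z + snd z)"
    and continuous_scaleR: "continuous_on UNIV (\<lambda>z::'a. c *\<^sub>R z)"
    and closed_carrier: "closed V"
    and continuous_S: "continuous_on V S"
    and continuous_T_S: "continuous_on V (\<lambda>v. op_app T (S v))"
begin

lemma limit_unique:
  fixes f :: "'b \<Rightarrow> 'a"
  shows "F \<noteq> bot \<Longrightarrow> (f \<longlongrightarrow> a) F \<Longrightarrow> (f \<longlongrightarrow> b) F \<Longrightarrow> a = b"
  using limitin_Hausdorff_unique[OF _ _ _ Hausdorff] by simp

lemma tendsto_plus:
  fixes f g :: "'b \<Rightarrow> 'a"
  shows "(f \<longlongrightarrow> a) F \<Longrightarrow> (g \<longlongrightarrow> b) F \<Longrightarrow> ((\<lambda>j. f j + g j) \<longlongrightarrow> a + b) F"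
  using continuous_on_tendsto_compose[OF continuous_add tendsto_Pair] by simp

lemma tendsto_scale:
  fixes f :: "'b \<Rightarrow> 'a"
  shows "(f \<longlongrightarrow> a) F \<Longrightarrow> ((\<lambda>j. c *\<^sub>R f j) \<longlongrightarrow> c *\<^sub>R a) F"
  using continuous_on_tendsto_compose[OF continuous_scaleR] by simp

lemma tendsto_minus:
  fixes f g :: "'b \<Rightarrow> 'a"
  shows "(f \<longlongrightarrow> a) F \<Longrightarrow> (g \<longlongrightarrow> b) F \<Longrightarrow> ((\<lambda>j. f j - g j) \<longlongrightarrow> a - b) F"
  using tendsto_plus[of f a F "\<lambda>j. (-1) *\<^sub>R g j" "(-1) *\<^sub>R b"] tendsto_scale[of g b F "-1"] by simp

lemma tendsto_sum_scale:
  fixes f :: "'i \<Rightarrow> 'b \<Rightarrow> 'a"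
  shows "finite I \<Longrightarrow> (\<And>i. i \<in> I \<Longrightarrow> (f i \<longlongrightarrow> a i) F) \<Longrightarrow>
    ((\<lambda>j. \<Sum>i\<in>I. c i *\<^sub>R f i j) \<longlongrightarrow> (\<Sum>i\<in>I. c i *\<^sub>R a i)) F"
  by (induction I rule: finite_induct) (simp_all add: tendsto_plus tendsto_scale)

lemma tendsto_S:
  fixes f :: "'b \<Rightarrow> 'a"
  shows "(f \<longlongrightarrow> a) F \<Longrightarrow> a \<in> V \<Longrightarrow> \<forall>\<^sub>F j in F. f j \<in> V \<Longrightarrow> ((\<lambda>j. S (f j)) \<longlongrightarrow> S a) F"
  by (rule continuous_on_tendsto_compose[OF continuous_S])

lemma tendsto_T_S:
  fixes f :: "'b \<Rightarrow> 'a"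
  shows "(f \<longlongrightarrow> a) F \<Longrightarrow> a \<in> V \<Longrightarrow> \<forall>\<^sub>F j in F. f j \<in> V \<Longrightarrow>
    ((\<lambda>j. op_app T (S (f j))) \<longlongrightarrow> op_app T (S a)) F"
  by (rule continuous_on_tendsto_compose[OF continuous_T_S])

lemma tendsto_T_T_S:
  fixes f :: "'b \<Rightarrow> 'a"
  assumes f: "(f \<longlongrightarrow> a) F" and a: "a \<in> V" and ev: "\<forall>\<^sub>F j in F. f j \<in> V"
  shows "((\<lambda>j. op_app T (op_app T (S (f j)))) \<longlongrightarrow> op_app T (op_app T (S a))) F"
proof -
  have "((\<lambda>j. f j + (2 * re) *\<^sub>R op_app T (S (f j)) - nsq *\<^sub>R S (f j)) \<longlongrightarrow>
      a + (2 * re) *\<^sub>R op_app T (S a) - nsq *\<^sub>R S a) F"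
    by (intro tendsto_minus tendsto_plus tendsto_scale tendsto_S tendsto_T_S f a ev)
  moreover have "\<forall>\<^sub>F j in F. f j + (2 * re) *\<^sub>R op_app T (S (f j)) - nsq *\<^sub>R S (f j) =
      op_app T (op_app T (S (f j)))"
    using ev by (rule eventually_mono) (simp add: T_T_S)
  ultimately show ?thesis unfolding T_T_S[OF a] by (rule Lim_transform_eventually)
qed

lemma T_closed_limit:
  fixes xs :: "'b \<Rightarrow> 'a"
  assumes F: "F \<noteq> bot" and xs: "\<forall>\<^sub>F j in F. xs j \<in> op_dom T"
    and x: "(xs \<longlongrightarrow> x) F" and y: "((\<lambda>j. op_app T (xs j)) \<longlongrightarrow> y) F"
  shows "x \<in> op_dom T \<and> op_app T x = y"
proof -
  have ev: "\<forall>\<^sub>F j in F. xs j \<in> V" "\<forall>\<^sub>F j in F. op_app T (xs j) \<in> V"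
    using xs dom_subset app_in_carrier by (auto elim: eventually_mono)
  have xV: "x \<in> V" using Lim_in_closed_set[OF closed_carrier ev(1) F x] .
  have yV: "y \<in> V" using Lim_in_closed_set[OF closed_carrier ev(2) F y] .
  have "((\<lambda>j. op_app T (S (xs j))) \<longlongrightarrow> S y) F"
    using tendsto_S[OF y yV ev(2)]
    by (rule Lim_transform_eventually) (use xs in \<open>auto elim: eventually_mono simp: T_commute_S\<close>)
  hence TSx: "op_app T (S x) = S y" using limit_unique[OF F tendsto_T_S[OF x xV ev(1)]] by blast
  have dom: "S x \<in> op_dom T" "S y \<in> op_dom T" "op_app T (S y) \<in> op_dom T"
    using S_in_dom_T xV yV by auto
  define w where "w = op_app T (S y) - (2 * re) *\<^sub>R S y + nsq *\<^sub>R S x"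
  have "x = w" using T_T_S[OF xV] unfolding TSx w_def by (simp add: algebra_simps)
  moreover have "w \<in> op_dom T"
    unfolding w_def using dom linear by (simp add: op_linear_def subspace_add subspace_diff subspace_scale)
  moreover have "op_app T w = y"
    unfolding w_def using dom linear subspace_scale TSx T_T_S[OF yV]
    by (simp add: op_linear_app_add op_linear_app_diff op_linear_app_scale op_linear_def
        subspace_diff subspace_scale)
  ultimately show ?thesis by simp
qed

lemma Tpoly_div_convergent:
  fixes xs :: "'b \<Rightarrow> 'a"
  assumes F: "F \<noteq> bot" and xs: "\<forall>\<^sub>F j in F. xs j \<in> D (degree p)" and x: "(xs \<longlongrightarrow> x) F"
    and p: "2 \<le> degree p" and l: "((\<lambda>j. Tpoly p (xs j)) \<longlongrightarrow> l) F"
  shows "\<exists>l'. ((\<lambda>j. Tpoly (pCons 0 (p div Q_poly)) (xs j)) \<longlongrightarrow> l') F"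
proof -
  define c0 c1 where "c0 = coeff (p mod Q_poly) 0" and "c1 = coeff (p mod Q_poly) 1"
  have evV: "\<forall>\<^sub>F j in F. xs j \<in> V" "\<forall>\<^sub>F j in F. Tpoly p (xs j) \<in> V"
    using xs dom_pow_subset_carrier Tpoly_in_dom[of _ p 0] by (auto elim!: eventually_mono)
  have xV: "x \<in> V" and lV: "l \<in> V"
    using Lim_in_closed_set[OF closed_carrier evV(1) F x] Lim_in_closed_set[OF closed_carrier evV(2) F l] .
  have "((\<lambda>j. op_app T (S (Tpoly p (xs j))) - c0 *\<^sub>R op_app T (S (xs j))
      - c1 *\<^sub>R op_app T (op_app T (S (xs j)))) \<longlongrightarrow>
      op_app T (S l) - c0 *\<^sub>R op_app T (S x) - c1 *\<^sub>R op_app T (op_app T (S x))) F"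
    using tendsto_T_S[OF l lV evV(2)] tendsto_scale[OF tendsto_T_S[OF x xV evV(1)]]
      tendsto_scale[OF tendsto_T_T_S[OF x xV evV(1)]]
    by (intro tendsto_minus)
  moreover have "\<forall>\<^sub>F j in F. op_app T (S (Tpoly p (xs j))) - c0 *\<^sub>R op_app T (S (xs j))
      - c1 *\<^sub>R op_app T (op_app T (S (xs j))) = Tpoly (pCons 0 (p div Q_poly)) (xs j)"
    using xs by (rule eventually_mono) (simp add: T_S_Tpoly[OF p] c0_def c1_def)
  ultimately show ?thesis by (blast intro: Lim_transform_eventually)
qed

lemma Tpoly_convergent_degrees:
  fixes xs :: "'b \<Rightarrow> 'a"
  assumes F: "F \<noteq> bot" and xs: "\<forall>\<^sub>F j in F. xs j \<in> D (degree P)" and x: "(xs \<longlongrightarrow> x) F"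
    and y: "((\<lambda>j. Tpoly P (xs j)) \<longlongrightarrow> y) F" and i: "i < degree P"
  shows "\<exists>q l. degree q = degree P - i \<and> ((\<lambda>j. Tpoly q (xs j)) \<longlongrightarrow> l) F"
  using i
proof (induction i)
  case 0 thus ?case using y by auto
next
  case (Suc i)
  then obtain q l where q: "degree q = degree P - i" and l: "((\<lambda>j. Tpoly q (xs j)) \<longlongrightarrow> l) F"
    by auto
  have dq: "2 \<le> degree q" using q Suc.prems by simp
  have "\<forall>\<^sub>F j in F. xs j \<in> D (degree q)"
    using xs dom_pow_antimono[of "degree q" "degree P"] q by (auto elim!: eventually_mono)
  then obtain l' where "((\<lambda>j. Tpoly (pCons 0 (q div Q_poly)) (xs j)) \<longlongrightarrow> l') F"
    using Tpoly_div_convergent[OF F _ x dq l] by blast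
  moreover have "degree (pCons 0 (q div Q_poly)) = degree P - Suc i"
    using degree_pCons_div_Q_poly[OF dq] q by simp
  ultimately show ?case by blast
qed

lemma Tpow_convergent:
  fixes xs :: "'b \<Rightarrow> 'a"
  assumes F: "F \<noteq> bot" and xs: "\<forall>\<^sub>F j in F. xs j \<in> D (degree P)" and x: "(xs \<longlongrightarrow> x) F"
    and y: "((\<lambda>j. Tpoly P (xs j)) \<longlongrightarrow> y) F" and k: "k \<le> degree P"
  shows "\<exists>z. ((\<lambda>j. Tpow k (xs j)) \<longlongrightarrow> z) F"
proof -
  define G where "G = {p. degree p \<le> degree P \<and> (\<exists>l. ((\<lambda>j. Tpoly p (xs j)) \<longlongrightarrow> l) F)}"
  have lincomb: "smult c p + q \<in> G" if pq: "p \<in> G" "q \<in> G" for c p q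
  proof -
    obtain l1 l2 where "((\<lambda>j. Tpoly p (xs j)) \<longlongrightarrow> l1) F" "((\<lambda>j. Tpoly q (xs j)) \<longlongrightarrow> l2) F"
      using pq unfolding G_def by blast
    hence "((\<lambda>j. Tpoly (smult c p + q) (xs j)) \<longlongrightarrow> c *\<^sub>R l1 + l2) F"
      by (simp add: Tpoly_lincomb tendsto_plus tendsto_scale)
    moreover have "degree (smult c p + q) \<le> degree P"
      using pq by (auto simp: G_def intro!: degree_add_le intro: le_trans[OF degree_smult_le])
    ultimately show ?thesis by (auto simp: G_def)
  qed
  have "monom 1 k \<in> G"
  proof (rule poly_in_lincomb_closed_set[OF lincomb])
    show "1 \<in> G" using x by (auto simp: G_def Tpoly_one)
    show "\<exists>q\<in>G. degree q = d" if "1 \<le> d" "d \<le> degree P" for d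
      using Tpoly_convergent_degrees[OF F xs x y, of "degree P - d"] that by (auto simp: G_def)
    show "degree (monom (1::real) k) \<le> degree P" using k by (simp add: degree_monom_eq)
  qed
  thus ?thesis by (simp add: G_def Tpoly_monom)
qed

lemma Tpoly_closed_limit:
  fixes xs :: "'b \<Rightarrow> 'a"
  assumes F: "F \<noteq> bot" and xs: "\<forall>\<^sub>F j in F. xs j \<in> D (degree P)" and x: "(xs \<longlongrightarrow> x) F"
    and y: "((\<lambda>j. Tpoly P (xs j)) \<longlongrightarrow> y) F"
  shows "x \<in> D (degree P) \<and> Tpoly P x = y"
proof -
  obtain z where z: "\<And>k. k \<le> degree P \<Longrightarrow> ((\<lambda>j. Tpow k (xs j)) \<longlongrightarrow> z k) F"
    using Tpow_convergent[OF F xs x y] by metis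
  have lim: "x \<in> D k \<and> Tpow k x = z k" if "k \<le> degree P" for k
    using that
  proof (induction k)
    case 0
    have "\<forall>\<^sub>F j in F. xs j \<in> V"
      using xs by (rule eventually_mono) (use dom_pow_subset_carrier in blast)
    hence "x \<in> V" using Lim_in_closed_set[OF closed_carrier _ F x] by blast
    thus ?case using limit_unique[OF F x] z[of 0] by simp
  next
    case (Suc k)
    hence IH: "x \<in> D k" "Tpow k x = z k" by simp_all
    have "\<forall>\<^sub>F j in F. Tpow k (xs j) \<in> op_dom T"
      using xs Tpow_in_dom Suc.prems by (auto elim!: eventually_mono)
    hence "Tpow k x \<in> op_dom T \<and> op_app T (Tpow k x) = z (Suc k)"
      using T_closed_limit[OF F _ z[of k]] z[OF Suc.prems] Suc.prems IH(2)
      by (simp add: op_pow_Suc)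
    thus ?case using IH(1) by (simp add: op_pow_Suc)
  qed
  have "((\<lambda>j. Tpoly P (xs j)) \<longlongrightarrow> Tpoly P x) F"
    unfolding op_poly_dom_app(2) using lim z by (intro tendsto_sum_scale) auto
  thus ?thesis using limit_unique[OF F _ y] lim by blast
qed

lemma op_closed_op_poly: "op_closed (op_poly V T P)"
  unfolding op_closed_def closed_limpt
proof (intro allI impI)
  define G where "G = {(x, op_app (op_poly V T P) x) | x. x \<in> op_dom (op_poly V T P)}"
  fix z assume "z islimpt {(x, op_app (op_poly V T P) x) | x. x \<in> op_dom (op_poly V T P)}"
  hence F: "at z within G \<noteq> bot" by (simp add: G_def trivial_limit_within)
  have G: "\<forall>\<^sub>F w in at z within G. fst w \<in> D (degree P) \<and> snd w = Tpoly P (fst w)"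
    unfolding eventually_at_filter by (rule always_eventually) (auto simp: G_def op_poly_dom_app(1))
  have "((\<lambda>w. Tpoly P (fst w)) \<longlongrightarrow> snd z) (at z within G)"
    using tendsto_snd[OF tendsto_ident_at[of z G]]
    by (rule Lim_transform_eventually) (use G in \<open>auto elim!: eventually_mono\<close>)
  moreover have "\<forall>\<^sub>F w in at z within G. fst w \<in> D (degree P)"
    using G by (rule eventually_mono) simp
  ultimately have "fst z \<in> D (degree P) \<and> Tpoly P (fst z) = snd z"
    using Tpoly_closed_limit[OF F _ tendsto_fst[OF tendsto_ident_at]] by blast
  thus "z \<in> G" by (auto simp: G_def op_poly_dom_app(1) intro: exI[of _ "fst z"] prod_eqI)
qed

end

lemma inv_in_mono: "inv_in V Q B \<Longrightarrow> B \<subseteq> B' \<Longrightarrow> inv_in V Q B'"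
  unfolding inv_in_def by blast

lemma banach_op_poly_closed:
  fixes T :: "'v::banach op"
  assumes T: "op_linear T" "op_closed T"
    and inv: "inv_in UNIV (op_Q UNIV T re nsq) {S. bounded_linear S}"
  shows "op_closed (op_poly UNIV T P)"
proof -
  obtain S where S: "bounded_linear S" and S_dom: "\<And>v. S v \<in> op_dom (op_pow UNIV T 2)"
    and Q_S: "\<And>v. op_app (op_Q UNIV T re nsq) (S v) = v"
    and S_Q: "\<And>u. u \<in> op_dom (op_pow UNIV T 2) \<Longrightarrow> S (op_app (op_Q UNIV T re nsq) u) = u"
    using inv by (auto simp: inv_in_def op_Q_dom_app)
  have "S v \<in> op_dom T" for v
    using S_dom[of v] by (simp add: numeral_2_eq_2 op_pow_Suc)
  hence "bounded_linear (\<lambda>v. op_app T (S v))"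
    using closed_op_comp_bounded_linear[OF T S] by blast
  hence cont: "continuous_on UNIV S" "continuous_on UNIV (\<lambda>v. op_app T (S v))"
    using S by (simp_all add: linear_continuous_on)
  interpret linear_op UNIV T
    using T(1) by unfold_locales auto
  interpret Q_resolvent UNIV T S re nsq
    using S_dom Q_S S_Q cont by unfold_locales (auto intro!: continuous_intros)
  show ?thesis by (rule op_closed_op_poly)
qed

lemma qK_op_linear:
  assumes H: "two_sided_qbanach L R" and K: "qK R T"
  shows "op_linear T"
proof -
  have R_real: "R v (qreal c) = c *\<^sub>R v" for v c using H by (simp add: two_sided_qbanach_def)
  have "subspace (op_dom T)"
    using K R_real unfolding qK_def subspace_def by metis
  moreover have "op_app T (c *\<^sub>R x + y) = c *\<^sub>R op_app T x + op_app T y"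
    if "x \<in> op_dom T" "y \<in> op_dom T" for x y c
    using K that R_real unfolding qK_def by metis
  ultimately show ?thesis by (simp add: op_linear_def)
qed

lemma qbanach_op_poly_closed:
  assumes "two_sided_qbanach L R" and K: "qK R T" and "q_rhoS R T \<noteq> {}"
  shows "op_closed (op_poly UNIV T P)"
proof -
  obtain s where "inv_in UNIV (op_Q UNIV T (qRe s) ((qabs s)\<^sup>2)) (qB R)"
    using assms(3) by (auto simp: q_rhoS_def)
  hence "inv_in UNIV (op_Q UNIV T (qRe s) ((qabs s)\<^sup>2)) {S. bounded_linear S}"
    by (rule inv_in_mono) (auto simp: qB_def)
  moreover have "op_closed T" using K by (simp add: qK_def)
  ultimately show ?thesis by (intro banach_op_poly_closed qK_op_linear[OF assms(1) K])
qed

lemma Hausdorff_space_fun: "Hausdorff_space (euclidean :: ('i \<Rightarrow> 'w::metric_space) topology)"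
  unfolding euclidean_product_topology[symmetric] by (simp add: Hausdorff_space_product_topology)

lemma scaleR_fun_apply [simp]: "(c *\<^sub>R f) x = c *\<^sub>R f x"
  by (simp add: scaleR_fun_def)

lemma continuous_on_fun_add:
  "continuous_on UNIV (\<lambda>z :: ('i \<Rightarrow> 'w::topological_monoid_add) \<times> ('i \<Rightarrow> 'w). fst z + snd z)"
  by (intro continuous_on_coordinatewise_then_product)
    (simp add: continuous_on_add continuous_on_compose2[OF continuous_on_product_coordinates] continuous_intros)

lemma continuous_on_fun_scaleR:
  "continuous_on UNIV (\<lambda>z :: 'i \<Rightarrow> 'w::real_normed_vector. c *\<^sub>R z)"
  by (intro continuous_on_coordinatewise_then_product)
    (simp add: continuous_on_scaleR continuous_on_compose2[OF continuous_on_product_coordinates] continuous_intros)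

lemma subspace_cliff_V: "subspace (cliff_V n)"
  by (simp add: subspace_def cliff_V_def)

lemma closed_cliff_V: "closed (cliff_V n :: (nat set \<Rightarrow> 'w::real_normed_vector) set)"
proof -
  have "cliff_V n = (\<Inter>A\<in>{A. \<not> A \<subseteq> {1..n}}. {v :: nat set \<Rightarrow> 'w. v A = 0})"
    by (auto simp: cliff_V_def)
  moreover have "closed {v :: nat set \<Rightarrow> 'w. v A = 0}" for A
    by (rule closed_Collect_eq) (auto intro: continuous_on_const)
  ultimately show ?thesis by (auto intro: closed_INT)
qed

lemma continuous_on_cliff_act:
  fixes f :: "nat \<Rightarrow> 'w::real_normed_vector \<Rightarrow> 'w"
  assumes "\<And>i A. i \<le> n \<Longrightarrow> continuous_on X (\<lambda>v. f i (h v A))"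
  shows "continuous_on X (\<lambda>v. cliff_act n f (h v))"
proof (rule continuous_on_coordinatewise_then_product)
  fix B show "continuous_on X (\<lambda>v. cliff_act n f (h v) B)"
  proof (cases "B \<subseteq> {1..n}")
    case True
    have "continuous_on X (\<lambda>v. f 0 (h v B) +
        (\<Sum>i\<in>{1..n}. cliff_sign i B *\<^sub>R f i (h v (if i \<in> B then B - {i} else insert i B))))"
      using assms by (intro continuous_intros) auto
    thus ?thesis using True by (simp add: cliff_act_def)
  qed (simp add: cliff_act_def)
qed

lemma cliff_act_lincomb:
  fixes Ts :: "nat \<Rightarrow> ('w::real_normed_vector) op"
  assumes lin: "\<And>i. i \<le> n \<Longrightarrow> op_linear (Ts i)"
    and x: "\<And>A i. i \<le> n \<Longrightarrow> x A \<in> op_dom (Ts i)" and y: "\<And>A i. i \<le> n \<Longrightarrow> y A \<in> op_dom (Ts i)"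
  shows "cliff_act n (\<lambda>i. op_app (Ts i)) (c *\<^sub>R x + y) =
    c *\<^sub>R cliff_act n (\<lambda>i. op_app (Ts i)) x + cliff_act n (\<lambda>i. op_app (Ts i)) y"
proof -
  have app: "op_app (Ts i) (c *\<^sub>R x A + y A) = c *\<^sub>R op_app (Ts i) (x A) + op_app (Ts i) (y A)"
    if "i \<le> n" for i A
    using lin[OF that] x[OF that] y[OF that] by (simp add: op_linear_def)
  have "cliff_act n (\<lambda>i. op_app (Ts i)) (c *\<^sub>R x + y) B =
    c *\<^sub>R cliff_act n (\<lambda>i. op_app (Ts i)) x B + cliff_act n (\<lambda>i. op_app (Ts i)) y B" for B
  proof (cases "B \<subseteq> {1..n}")
    case True
    define C where "C i = (if i \<in> B then B - {i} else insert i B)" for i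
    have "cliff_sign i B *\<^sub>R op_app (Ts i) ((c *\<^sub>R x + y) (C i)) =
        c *\<^sub>R (cliff_sign i B *\<^sub>R op_app (Ts i) (x (C i))) + cliff_sign i B *\<^sub>R op_app (Ts i) (y (C i))"
      if "i \<in> {1..n}" for i
      using app[of i "C i"] that by (simp add: scaleR_add_right)
    hence "(\<Sum>i\<in>{1..n}. cliff_sign i B *\<^sub>R op_app (Ts i) ((c *\<^sub>R x + y) (C i))) =
        c *\<^sub>R (\<Sum>i\<in>{1..n}. cliff_sign i B *\<^sub>R op_app (Ts i) (x (C i)))
        + (\<Sum>i\<in>{1..n}. cliff_sign i B *\<^sub>R op_app (Ts i) (y (C i)))"
      by (simp add: sum.distrib scaleR_sum_right)
    thus ?thesis using True app[of 0 B] by (simp add: cliff_act_def C_def algebra_simps)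
  qed (simp add: cliff_act_def)
  thus ?thesis by (simp add: fun_eq_iff)
qed

lemma linear_op_para_op:
  assumes "\<And>i. i \<le> n \<Longrightarrow> op_linear (Ts i)"
  shows "linear_op (cliff_V n) (para_op n (Ts :: nat \<Rightarrow> ('w::real_normed_vector) op))"
proof
  have "subspace (op_dom (para_op n Ts))"
    using assms subspace_cliff_V[of n]
    by (auto simp: subspace_def op_linear_def para_op_def op_dom_def)
  thus "op_linear (para_op n Ts)"
    using cliff_act_lincomb[OF assms]
    by (simp add: op_linear_def para_op_def op_dom_def op_app_def)
  show "subspace (cliff_V n)" by (rule subspace_cliff_V)
qed (auto simp: para_op_def op_dom_def op_app_def cliff_V_def cliff_act_def)

lemma op_app_cliff_act:
  assumes T: "op_linear T" and Ss: "\<And>k w. k \<le> n \<Longrightarrow> Ss k w \<in> op_dom T"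
  shows "op_app T (cliff_act n Ss v A) = cliff_act n (\<lambda>k w. op_app T (Ss k w)) v A"
proof (cases "A \<subseteq> {1..n}")
  case True
  define C where "C i = (if i \<in> A then A - {i} else insert i A)" for i
  have "op_app T (\<Sum>i\<in>{1..n}. cliff_sign i A *\<^sub>R Ss i (v (C i))) =
      (\<Sum>i\<in>{1..n}. cliff_sign i A *\<^sub>R op_app T (Ss i (v (C i))))"
    and "(\<Sum>i\<in>{1..n}. cliff_sign i A *\<^sub>R Ss i (v (C i))) \<in> op_dom T"
    using op_linear_sum[OF T finite_atLeastAtMost, where x = "\<lambda>i. Ss i (v (C i))"] Ss by auto
  thus ?thesis
    using True Ss[of 0] op_linear_app_add[OF T] by (simp add: cliff_act_def C_def)
qed (simp add: cliff_act_def op_linear_app_zero[OF T])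

lemma cliff_act_scalar:
  assumes f0: "\<And>i. i \<le> n \<Longrightarrow> f i 0 = 0" and k: "k \<le> n"
  shows "cliff_act n f (\<lambda>A. if A = {} then w else 0) (if k = 0 then {} else {k}) = f k w"
proof (cases "k = 0")
  case True
  thus ?thesis using f0 by (simp add: cliff_act_def)
next
  case False
  have no_smaller: "{j \<in> {k}. j < k} = {}" by auto
  have "cliff_sign k {k} = 1" unfolding cliff_sign_def no_smaller by simp
  hence "(\<Sum>i\<in>{1..n}. cliff_sign i {k} *\<^sub>R f i (if (if i \<in> {k} then {k} - {i} else insert i {k}) = {}
      then w else 0)) = (\<Sum>i\<in>{1..n}. if i = k then f k w else 0)"
    using f0 by (intro sum.cong) auto
  thus ?thesis using False k f0 by (simp add: cliff_act_def)
qed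

lemma para_op_dom_coefficients:
  assumes Ss: "\<And>k. k \<le> n \<Longrightarrow> linear (Ss k)"
    and dom: "\<And>v. v \<in> cliff_V n \<Longrightarrow> cliff_act n Ss v \<in> op_dom (para_op n Ts)"
    and i: "i \<le> n" and k: "k \<le> n"
  shows "Ss k w \<in> op_dom (Ts i)"
proof -
  have "(\<lambda>A. if A = {} then w else 0) \<in> cliff_V n" by (simp add: cliff_V_def)
  hence "cliff_act n Ss (\<lambda>A. if A = {} then w else 0) (if k = 0 then {} else {k}) \<in> op_dom (Ts i)"
    using dom i by (simp add: para_op_def op_dom_def)
  moreover have "Ss j 0 = 0" if "j \<le> n" for j using Ss[OF that] by (rule linear_0)
  ultimately show ?thesis using cliff_act_scalar[of n Ss, OF _ k] by simp
qed

lemma continuous_on_para_op_cliff_act: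
  fixes Ts :: "nat \<Rightarrow> ('w::banach) op"
  assumes Ts: "\<And>i. i \<le> n \<Longrightarrow> op_linear (Ts i)" "\<And>i. i \<le> n \<Longrightarrow> op_closed (Ts i)"
    and Ss: "\<And>k. k \<le> n \<Longrightarrow> bounded_linear (Ss k)"
    and dom: "\<And>i k w. i \<le> n \<Longrightarrow> k \<le> n \<Longrightarrow> Ss k w \<in> op_dom (Ts i)"
  shows "continuous_on UNIV (cliff_act n Ss)"
    and "continuous_on UNIV (\<lambda>v. op_app (para_op n Ts) (cliff_act n Ss v))"
proof -
  have coord: "continuous_on UNIV (\<lambda>v. f (v A))" if "bounded_linear f" for f :: "'w \<Rightarrow> 'w" and A :: "nat set"
    by (rule continuous_on_compose2[OF linear_continuous_on[OF that] continuous_on_product_coordinates subset_UNIV])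
  show "continuous_on UNIV (cliff_act n Ss)"
    by (rule continuous_on_cliff_act[where h = "\<lambda>v. v", simplified]) (simp add: coord Ss)
  have cont_i: "continuous_on UNIV (cliff_act n (\<lambda>k w. op_app (Ts i) (Ss k w)))" if i: "i \<le> n" for i
  proof (rule continuous_on_cliff_act[where h = "\<lambda>v. v", simplified])
    fix k and A :: "nat set" assume k: "k \<le> n"
    show "continuous_on UNIV (\<lambda>v. op_app (Ts i) (Ss k (v A)))"
      using coord[OF closed_op_comp_bounded_linear[OF Ts(1)[OF i] Ts(2)[OF i] Ss[OF k] dom[OF i k]]] .
  qed
  have "continuous_on UNIV (\<lambda>v. op_app (Ts i) (cliff_act n Ss v A))" if i: "i \<le> n" for i A
    using continuous_on_product_then_coordinatewise[OF cont_i[OF i], of A]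
    by (simp add: op_app_cliff_act[OF Ts(1)[OF i] dom[OF i]])
  thus "continuous_on UNIV (\<lambda>v. op_app (para_op n Ts) (cliff_act n Ss v))"
    by (simp add: para_op_def op_app_def continuous_on_cliff_act)
qed

lemma Q_resolvent_para_op:
  fixes Ts :: "nat \<Rightarrow> ('w::banach) op"
  assumes Ts: "\<And>i. i \<le> n \<Longrightarrow> op_linear (Ts i)" "\<And>i. i \<le> n \<Longrightarrow> op_closed (Ts i)"
    and inv: "inv_in (cliff_V n) (op_Q (cliff_V n) (para_op n Ts) re nsq) (cB n)"
  obtains S where "Q_resolvent (cliff_V n) (para_op n Ts) S re nsq"
proof -
  interpret linear_op "cliff_V n" "para_op n Ts" by (rule linear_op_para_op[OF Ts(1)])
  obtain S Ss where Ss: "\<And>k. k \<le> n \<Longrightarrow> bounded_linear (Ss k)"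
    and S_eq: "\<And>v. v \<in> cliff_V n \<Longrightarrow> S v = cliff_act n Ss v"
    and S_dom: "\<And>v. v \<in> cliff_V n \<Longrightarrow> S v \<in> D 2"
    and Q_S: "\<And>v. v \<in> cliff_V n \<Longrightarrow> op_app (op_Q (cliff_V n) (para_op n Ts) re nsq) (S v) = v"
    and S_Q: "\<And>u. u \<in> D 2 \<Longrightarrow> S (op_app (op_Q (cliff_V n) (para_op n Ts) re nsq) u) = u"
    using inv unfolding inv_in_def cB_def op_Q_dom_app(1) by blast
  have lin: "linear (Ss k)" if "k \<le> n" for k using Ss[OF that] by (rule bounded_linear.linear)
  have "cliff_act n Ss v \<in> op_dom (para_op n Ts)" if "v \<in> cliff_V n" for v
    using S_dom[OF that] S_eq[OF that] by (simp add: numeral_2_eq_2 dom_pow_Suc2)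
  hence dom: "Ss k w \<in> op_dom (Ts i)" if "i \<le> n" "k \<le> n" for i k w
    using para_op_dom_coefficients[where Ss = Ss and Ts = Ts, OF lin _ that] by blast
  note cont = continuous_on_para_op_cliff_act[OF Ts Ss dom]
  have "Q_resolvent (cliff_V n) (para_op n Ts) S re nsq"
  proof (intro Q_resolvent.intro Q_inverse.intro Q_inverse_axioms.intro Q_resolvent_axioms.intro)
    show "continuous_on (cliff_V n) S"
      using continuous_on_subset[OF cont(1)] S_eq by (simp cong: continuous_on_cong)
    show "continuous_on (cliff_V n) (\<lambda>v. op_app (para_op n Ts) (S v))"
      using continuous_on_subset[OF cont(2)] S_eq by (simp cong: continuous_on_cong)
  qed (simp_all add: linear_op_axioms S_dom Q_S S_Q Hausdorff_space_fun continuous_on_fun_add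
      continuous_on_fun_scaleR closed_cliff_V)
  thus thesis by (rule that)
qed

lemma clifford_op_poly_closed:
  fixes T :: "(nat set \<Rightarrow> 'w::banach) op"
  assumes K: "cK n T" and rho: "c_rhoS n T \<noteq> {}"
  shows "op_closed (op_poly (cliff_V n) T P)"
proof -
  obtain Ts where Ts: "\<And>i. i \<le> n \<Longrightarrow> op_linear (Ts i)" "\<And>i. i \<le> n \<Longrightarrow> op_closed (Ts i)"
    and T: "T = para_op n Ts"
    using K by (auto simp: cK_def real_closed_op_iff)
  obtain re nsq where "inv_in (cliff_V n) (op_Q (cliff_V n) T re nsq) (cB n)"
    using rho by (auto simp: c_rhoS_def)
  then obtain S where "Q_resolvent (cliff_V n) T S re nsq"
    using Q_resolvent_para_op[where Ts = Ts and n = n, OF Ts] T by blast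
  then interpret Q_resolvent "cliff_V n" T S re nsq .
  show ?thesis by (rule op_closed_op_poly)
qed

theorem mainTheorem11:
  fixes L :: "quat \<Rightarrow> 'v::banach \<Rightarrow> 'v" and R :: "'v \<Rightarrow> quat \<Rightarrow> 'v"
    and T :: "'v op" and n :: nat and T' :: "(nat set \<Rightarrow> 'w::banach) op"
    and P :: "real poly"
  shows "(two_sided_qbanach L R \<and> qK R T \<and> q_rhoS R T \<noteq> {}
            \<longrightarrow> op_closed (op_poly UNIV T P))
       \<and> (cK n T' \<and> c_rhoS n T' \<noteq> {}
            \<longrightarrow> op_closed (op_poly (cliff_V n) T' P))"
  using qbanach_op_poly_closed[of L R T P] clifford_op_poly_closed[of n T' P] by blast

end
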